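(* Let $\epsilon>0$ be the parameter of instance $\mathcal P$ and let $\hat\epsilon\in[0,\epsilon]$. If $(x^*,y^* )$ is an $\hat\epsilon$-stationary point of the splitting reformulation (SP) of instance $\mathcal P$, then $x^*$ is a $2\hat\epsilon$-stationary point of the auxiliary problem (AP): $\min_xf_0(x)$ s.t. $Hx=0$.
   Context: (SP) of instance $\mathcal P$: $\min_{x,y}f_0(x)+\bar g(y)$ s.t. $Ax+b=0$, $y=\bar Ax+\bar b$. $(x^*,y^* )$ is an $\hat\epsilon$-stationary point of (SP) if there exist $z_1\in\mathbb R^{\bar n}$, $z_2\in\mathbb R^n$ with $\max\{\mathrm{dist}(0,\partial\bar g(y^* )-z_1),\|\nabla f_0(x^* )+\bar A^\top z_1+A^\top z_2\|,\|y^*-\bar Ax^*-\bar b\|,\|Ax^*+b\|\}\le\hat\epsilon$. $x^*$ is a $\delta$-stationary point of (AP) if $\max\{\|Hx^*\|,\min_{\gamma'}\|\nabla f_0(x^* )+H^\top\gamma'\|\}\le\delta$. Instance $\mathcal P$: fix $\epsilon\in(0,1)$, $L_f>0$, integers $m_1\ge2$, $m_2\ge1$ with $m_1m_2$ even, $m=3m_1m_2$, an odd integer $\bar d\ge5$, $d=m\bar d$. Write $x=(x_1^\top,\dots,x_m^\top)^\top$, $x_i\in\mathbb R^{\bar d}$; $[z]_j$ is the $j$-th coordinate. $J_p\in\mathbb R^{(p-1)\times p}$ has $-1$ at $(k,k)$, $1$ at $(k,k+1)$, zero elsewhere. $H=mL_f(J_m\otimes I_{\bar d})$. $\mathcal M=\{im_1:i=1,\dots,3m_2-1\}$,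 $\mathcal M^C=\{1,\dots,m-1\}\setminus\mathcal M$, $n=(m-3m_2)\bar d$, $\bar n=(3m_2-1)\bar d$, $\bar A=mL_f(J_{\mathcal M}\otimes I_{\bar d})$, $A=mL_f(J_{\mathcal M^C}\otimes I_{\bar d})$ with $J_{\mathcal M},J_{\mathcal M^C}$ the rows of $J_m$ indexed by $\mathcal M,\mathcal M^C$; $b=0$, $\bar b=0$. Choose $\beta>(50\pi+1+\|A\|)\sqrt m\,\epsilon$; $\bar g(y)=\frac{\beta}{mL_f}\|y\|_1$. $\Psi(u)=0$ ($u\le0$), $1-e^{-u^2}$ ($u>0$); $\Phi(v)=4\arctan v+2\pi$. For $z\in\mathbb R^{\bar d}$: $\varphi(z,1)=-\Psi(1)\Phi([z]_1)$, $\varphi(z,j)=\Psi(-[z]_{j-1})\Phi(-[z]_j)-\Psi([z]_{j-1})\Phi([z]_j)$ ($2\le j\le\bar d$); $h_i(z)=\varphi(z,1)+3\sum_{j=1}^{\lfloor\bar d/2\rfloor}\varphi(z,2j)$ for $1\le i\le m/3$, $h_i(z)=\varphi(z,1)$ for $m/3+1\le i\le 2m/3$, $h_i(z)=\varphi(z,1)+3\sum_{j=1}^{\lfloor\bar d/2\rfloor}\varphi(z,2j+1)$ for $2m/3+1\le i\le m$. $f_i(z)=\frac{300\pi\epsilon^2}{mL_f}h_i(\frac{\sqrt mL_fz}{150\pi\epsilon})$, $f_0(x)=\sum_{i=1}^mf_i(x_i)$. Instance $\mathcal P$ is $\min_xf_0(x)+\bar g(\bar Ax)$ s.t. $Ax+b=0$.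 *)

theory Defs
  imports "HOL-Analysis.Analysis"
begin

text \<open>A vector of R^I (I a finite index set) is a function on the index type,
  required to vanish outside I. Blocks of x in R^(m*dbar) are indexed by pairs
  (i,j) with 1 <= i <= m (block) and 1 <= j <= dbar (coordinate).\<close>

type_synonym vec = "nat \<times> nat \<Rightarrow> real"

definition vecs :: "(nat \<times> nat) set \<Rightarrow> vec set" where
  "vecs I = {v. \<forall>p. p \<notin> I \<longrightarrow> v p = 0}"

definition vinner :: "(nat \<times> nat) set \<Rightarrow> vec \<Rightarrow> vec \<Rightarrow> real" where
  "vinner I u v = (\<Sum>p\<in>I. u p * v p)"

definition vnorm :: "(nat \<times> nat) set \<Rightarrow> vec \<Rightarrow> real" where
  "vnorm I v = sqrt (\<Sum>p\<in>I. (v p)\<^sup>2)"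

definition l1norm :: "(nat \<times> nat) set \<Rightarrow> vec \<Rightarrow> real" where
  "l1norm I v = (\<Sum>p\<in>I. \<bar>v p\<bar>)"

definition matvec :: "(nat \<times> nat) set \<Rightarrow> (nat \<times> nat) set \<Rightarrow> (nat \<times> nat \<Rightarrow> nat \<times> nat \<Rightarrow> real) \<Rightarrow> vec \<Rightarrow> vec" where
  "matvec R C M x = (\<lambda>r. if r \<in> R then (\<Sum>c\<in>C. M r c * x c) else 0)"

definition tmatvec :: "(nat \<times> nat) set \<Rightarrow> (nat \<times> nat) set \<Rightarrow> (nat \<times> nat \<Rightarrow> nat \<times> nat \<Rightarrow> real) \<Rightarrow> vec \<Rightarrow> vec" where
  "tmatvec R C M z = (\<lambda>c. if c \<in> C then (\<Sum>r\<in>R. M r c * z r) else 0)"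

definition opnorm :: "(nat \<times> nat) set \<Rightarrow> (nat \<times> nat) set \<Rightarrow> (nat \<times> nat \<Rightarrow> nat \<times> nat \<Rightarrow> real) \<Rightarrow> real" where
  "opnorm R C M = Sup {vnorm R (matvec R C M x) | x. x \<in> vecs C \<and> vnorm C x \<le> 1}"

definition grad :: "(nat \<times> nat) set \<Rightarrow> (vec \<Rightarrow> real) \<Rightarrow> vec \<Rightarrow> vec" where
  "grad I f x = (\<lambda>p. if p \<in> I then deriv (\<lambda>t. f (x(p := t))) (x p) else 0)"

definition subdiff :: "(nat \<times> nat) set \<Rightarrow> (vec \<Rightarrow> real) \<Rightarrow> vec \<Rightarrow> vec set" where
  "subdiff I g y = {s \<in> vecs I. \<forall>w \<in> vecs I. g w \<ge> g y + vinner I s (\<lambda>p. w p - y p)}"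

definition dist0_shift :: "(nat \<times> nat) set \<Rightarrow> vec set \<Rightarrow> vec \<Rightarrow> real" where
  "dist0_shift I S z = Inf {vnorm I (\<lambda>p. s p - z p) | s. s \<in> S}"

definition Psi :: "real \<Rightarrow> real" where
  "Psi u = (if u \<le> 0 then 0 else 1 - exp (- (u\<^sup>2)))"

definition Phi :: "real \<Rightarrow> real" where
  "Phi v = 4 * arctan v + 2 * pi"

text \<open>z in R^dbar is a function nat => real with coordinates [z]_j = z j, 1 <= j <= dbar.\<close>
definition varphi :: "(nat \<Rightarrow> real) \<Rightarrow> nat \<Rightarrow> real" where
  "varphi z j = (if j = 1 then - Psi 1 * Phi (z 1)
                 else Psi (- z (j - 1)) * Phi (- z j) - Psi (z (j - 1)) * Phi (z j))"

definition hfun :: "nat \<Rightarrow> nat \<Rightarrow> nat \<Rightarrow> (nat \<Rightarrow> real) \<Rightarrow> real" where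
  "hfun m dbar i z =
     (if 1 \<le> i \<and> i \<le> m div 3 then varphi z 1 + 3 * (\<Sum>j=1..dbar div 2. varphi z (2 * j))
      else if m div 3 + 1 \<le> i \<and> i \<le> 2 * m div 3 then varphi z 1
      else varphi z 1 + 3 * (\<Sum>j=1..dbar div 2. varphi z (2 * j + 1)))"

definition ffun :: "real \<Rightarrow> real \<Rightarrow> nat \<Rightarrow> nat \<Rightarrow> nat \<Rightarrow> (nat \<Rightarrow> real) \<Rightarrow> real" where
  "ffun \<epsilon> Lf m dbar i z =
     300 * pi * \<epsilon>\<^sup>2 / (real m * Lf) *
       hfun m dbar i (\<lambda>j. sqrt (real m) * Lf * z j / (150 * pi * \<epsilon>))"

definition f0 :: "real \<Rightarrow> real \<Rightarrow> nat \<Rightarrow> nat \<Rightarrow> vec \<Rightarrow> real" where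
  "f0 \<epsilon> Lf m dbar x = (\<Sum>i=1..m. ffun \<epsilon> Lf m dbar i (\<lambda>j. x (i, j)))"

definition Xidx :: "nat \<Rightarrow> nat \<Rightarrow> (nat \<times> nat) set" where
  "Xidx m dbar = {1..m} \<times> {1..dbar}"

definition Hrows :: "nat \<Rightarrow> nat \<Rightarrow> (nat \<times> nat) set" where
  "Hrows m dbar = {1..m - 1} \<times> {1..dbar}"

definition Mset :: "nat \<Rightarrow> nat \<Rightarrow> nat set" where
  "Mset m1 m2 = {i * m1 | i. 1 \<le> i \<and> i \<le> 3 * m2 - 1}"

definition MCset :: "nat \<Rightarrow> nat \<Rightarrow> nat set" where
  "MCset m1 m2 = {1..3 * m1 * m2 - 1} - Mset m1 m2"

text \<open>Entries of J_m (row k in 1..m-1, column i in 1..m).\<close>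
definition Jent :: "nat \<Rightarrow> nat \<Rightarrow> real" where
  "Jent k i = (if i = k then -1 else if i = k + 1 then 1 else 0)"

text \<open>Entries of m L_f (J \<otimes> I_dbar); H, Abar, A are its restrictions to the row
  index sets Hrows, Mset x {1..dbar}, MCset x {1..dbar} respectively.\<close>
definition Kmat :: "nat \<Rightarrow> real \<Rightarrow> nat \<times> nat \<Rightarrow> nat \<times> nat \<Rightarrow> real" where
  "Kmat m Lf r c = real m * Lf * Jent (fst r) (fst c) * (if snd r = snd c then 1 else 0)"

definition gbar :: "real \<Rightarrow> nat \<Rightarrow> real \<Rightarrow> (nat \<times> nat) set \<Rightarrow> vec \<Rightarrow> real" where
  "gbar \<beta> m Lf R y = \<beta> / (real m * Lf) * l1norm R y"

text \<open>Hat-epsilon-stationarity for (SP) of instance P (b = 0, bbar = 0).\<close>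
definition SP_stationary ::
  "real \<Rightarrow> real \<Rightarrow> nat \<Rightarrow> nat \<Rightarrow> nat \<Rightarrow> real \<Rightarrow> real \<Rightarrow> vec \<Rightarrow> vec \<Rightarrow> bool" where
  "SP_stationary \<epsilon> Lf m1 m2 dbar \<beta> eh xs ys \<longleftrightarrow>
     (let m = 3 * m1 * m2; X = Xidx m dbar;
          Rb = Mset m1 m2 \<times> {1..dbar}; Ra = MCset m1 m2 \<times> {1..dbar} in
      \<exists>z1 \<in> vecs Rb. \<exists>z2 \<in> vecs Ra.
        max (max (dist0_shift Rb (subdiff Rb (gbar \<beta> m Lf Rb) ys) z1)
                 (vnorm X (\<lambda>p. grad X (f0 \<epsilon> Lf m dbar) xs p
                              + tmatvec Rb X (Kmat m Lf) z1 p
                              + tmatvec Ra X (Kmat m Lf) z2 p)))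
            (max (vnorm Rb (\<lambda>p. ys p - matvec Rb X (Kmat m Lf) xs p))
                 (vnorm Ra (matvec Ra X (Kmat m Lf) xs)))
        \<le> eh)"

definition AP_stationary :: "real \<Rightarrow> real \<Rightarrow> nat \<Rightarrow> nat \<Rightarrow> real \<Rightarrow> vec \<Rightarrow> bool" where
  "AP_stationary \<epsilon> Lf m dbar \<delta> xs \<longleftrightarrow>
     (let X = Xidx m dbar; R = Hrows m dbar in
      max (vnorm R (matvec R X (Kmat m Lf) xs))
          (Inf {vnorm X (\<lambda>p. grad X (f0 \<epsilon> Lf m dbar) xs p + tmatvec R X (Kmat m Lf) \<gamma> p)
                | \<gamma>. \<gamma> \<in> vecs R})
        \<le> \<delta>)"

end

theory Submission
  imports Defs
begin

(* Put gamma = z1 + z2, a multiplier for the merged constraint Hx = 0: then the gradient residual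
   of (AP) at gamma is the one of (SP), so it is at most eh. Since Ax is small by assumption and
   Abar x is close to y, feasibility follows once y vanishes on the rows in M. If y_p were nonzero,
   every subgradient of gbar at y would have p-th entry of absolute value beta/(m Lf), forcing
   |z1_p| >= beta/(m Lf) - eh. But H^T is m Lf times a difference operator, so summing the gradient
   residual over the blocks 1..k telescopes to m Lf gamma(k, j); this is at most m times the bound
   2 eps/sqrt m (16 + 12 pi) on the partial derivatives of f0, plus sqrt m eh. The choice of beta
   makes the two estimates incompatible. *)

section \<open>Partial derivatives of the objective\<close>

lemma has_real_derivative_max0_squared:
  "((\<lambda>u::real. (max u 0)\<^sup>2) has_real_derivative 2 * max u 0) (at u)"
proof (cases u "0::real" rule: linorder_cases)
  case less
  have "((\<lambda>u::real. 0) has_real_derivative 2 * max u 0) (at u)"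
    using less by simp
  then show ?thesis
    by (rule has_field_derivative_transform_within_open[where S="{..<0}"]) (use less in auto)
next
  case greater
  have "((\<lambda>u::real. u\<^sup>2) has_real_derivative 2 * max u 0) (at u)"
    using greater by (auto intro!: derivative_eq_intros)
  then show ?thesis
    by (rule has_field_derivative_transform_within_open[where S="{0<..}"]) (use greater in auto)
next
  case equal
  have "((\<lambda>y. (max y 0)\<^sup>2 / y) \<longlongrightarrow> 0) (at (0::real))"
  proof (rule Lim_null_comparison)
    show "\<forall>\<^sub>F y in at 0. norm ((max y 0)\<^sup>2 / y) \<le> \<bar>y\<bar>"
      by (intro always_eventually allI) (simp add: max_def power2_eq_square)
    show "((\<lambda>y::real. \<bar>y\<bar>) \<longlongrightarrow> 0) (at 0)"
      by (intro tendsto_rabs_zero tendsto_ident_at)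
  qed
  then show ?thesis using equal by (simp add: has_field_derivative_iff)
qed

definition dPsi :: "real \<Rightarrow> real" where
  "dPsi u = 2 * max u 0 * exp (- (max u 0)\<^sup>2)"

lemma Psi_has_real_derivative: "(Psi has_real_derivative dPsi u) (at u)"
proof -
  have Psi_eq: "Psi = (\<lambda>u. 1 - exp (- (max u 0)\<^sup>2))"
    by (auto simp: Psi_def max_def fun_eq_iff)
  have "((\<lambda>u. - (max u 0)\<^sup>2) has_real_derivative - (2 * max u 0)) (at u)"
    by (rule DERIV_minus[OF has_real_derivative_max0_squared])
  then have "((\<lambda>u. exp (- (max u 0)\<^sup>2)) has_real_derivative
               exp (- (max u 0)\<^sup>2) * - (2 * max u 0)) (at u)"
    by (rule DERIV_fun_exp)
  then have "((\<lambda>u. 1 - exp (- (max u 0)\<^sup>2)) has_real_derivative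
               0 - exp (- (max u 0)\<^sup>2) * - (2 * max u 0)) (at u)"
    by (intro DERIV_diff DERIV_const)
  then show ?thesis
    unfolding Psi_eq dPsi_def by (simp add: ac_simps)
qed

lemma dPsi_nonneg: "0 \<le> dPsi u"
  by (simp add: dPsi_def)

lemma dPsi_le_one: "dPsi u \<le> 1"
proof -
  let ?v = "max u 0"
  have "2 * ?v \<le> 1 + ?v\<^sup>2"
    using sum_squares_bound[of ?v 1] by (simp add: power2_eq_square)
  also have "\<dots> \<le> exp (?v\<^sup>2)"
    by (rule exp_ge_add_one_self)
  finally show ?thesis
    by (simp add: dPsi_def exp_minus field_simps)
qed

lemma dPsi_add_reflect_le_one: "dPsi u + dPsi (- u) \<le> 1"
  using dPsi_le_one[of u] dPsi_le_one[of "- u"]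
  by (cases "u \<le> 0") (auto simp: dPsi_def max_def)

lemma Psi_add_reflect_le_one: "Psi u + Psi (- u) \<le> 1"
  by (cases "u \<le> 0") (auto simp: Psi_def)

lemma Psi_nonneg: "0 \<le> Psi u"
  by (simp add: Psi_def)

lemma Psi_le_one: "Psi u \<le> 1"
  by (simp add: Psi_def)

definition dPhi :: "real \<Rightarrow> real" where
  "dPhi v = 4 / (1 + v\<^sup>2)"

lemma Phi_has_real_derivative: "(Phi has_real_derivative dPhi v) (at v)"
  unfolding Phi_def[abs_def] dPhi_def
  by (auto intro!: derivative_eq_intros simp: power2_eq_square field_simps)

lemma dPhi_nonneg: "0 \<le> dPhi v"
  by (simp add: dPhi_def)

lemma dPhi_le_four: "dPhi v \<le> 4"
  by (simp add: dPhi_def divide_le_eq add_pos_nonneg)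

lemma Phi_nonneg: "0 \<le> Phi v"
  using arctan_bounded[of v] by (simp add: Phi_def)

lemma Phi_le_four_pi: "Phi v \<le> 4 * pi"
  using arctan_bounded[of v] by (simp add: Phi_def)

lemma abs_weighted_sum_le:
  fixes p q a b c :: real
  assumes "0 \<le> p" "0 \<le> q" "p + q \<le> 1" "0 \<le> a" "a \<le> c" "0 \<le> b" "b \<le> c"
  shows "\<bar>p * a + q * b\<bar> \<le> c"
proof -
  have "\<bar>p * a + q * b\<bar> = p * a + q * b"
    using assms by simp
  also have "\<dots> \<le> p * c + q * c"
    using assms by (intro add_mono mult_left_mono) auto
  also have "\<dots> = (p + q) * c"
    by (simp add: distrib_right)
  also have "\<dots> \<le> c"
    using assms by (intro mult_left_le_one_le) auto
  finally show ?thesis .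
qed

lemma has_real_derivative_odd_combination:
  assumes "\<And>x. (F has_real_derivative F' x) (at x)"
  shows "((\<lambda>t. p * F (- t) - q * F t) has_real_derivative - (p * F' (- s) + q * F' s)) (at s)"
proof -
  have "((\<lambda>t. F (- t)) has_real_derivative F' (- s) * - 1) (at s)"
    by (rule DERIV_chain2[OF assms DERIV_minus[OF DERIV_ident]])
  from DERIV_diff[OF DERIV_cmult[OF this] DERIV_cmult[OF assms]] show ?thesis
    by simp
qed

definition partial_deriv_bounded :: "((nat \<Rightarrow> real) \<Rightarrow> real) \<Rightarrow> nat \<Rightarrow> real \<Rightarrow> bool" where
  "partial_deriv_bounded h j B \<longleftrightarrow>
     (\<forall>z s. \<exists>D. ((\<lambda>t. h (z(j := t))) has_real_derivative D) (at s) \<and> \<bar>D\<bar> \<le> B)"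

lemma partial_deriv_boundedI:
  assumes "\<And>z s. ((\<lambda>t. h (z(j := t))) has_real_derivative D z s) (at s)"
    and "\<And>z s. \<bar>D z s\<bar> \<le> B"
  shows "partial_deriv_bounded h j B"
  using assms unfolding partial_deriv_bounded_def by blast

lemma partial_deriv_bounded_const:
  assumes "\<And>z t. h (z(j := t)) = h z"
  shows "partial_deriv_bounded h j 0"
  by (rule partial_deriv_boundedI[where D="\<lambda>_ _. 0"]) (simp_all add: assms)

lemma partial_deriv_bounded_mono:
  "partial_deriv_bounded h j B \<Longrightarrow> B \<le> B' \<Longrightarrow> partial_deriv_bounded h j B'"
  unfolding partial_deriv_bounded_def by (meson order_trans)

lemma partial_deriv_bounded_add:
  assumes "partial_deriv_bounded g j B" "partial_deriv_bounded h j C"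
  shows "partial_deriv_bounded (\<lambda>z. g z + h z) j (B + C)"
  unfolding partial_deriv_bounded_def
proof (intro allI)
  fix z s
  obtain D E where "((\<lambda>t. g (z(j := t))) has_real_derivative D) (at s)" "\<bar>D\<bar> \<le> B"
    and "((\<lambda>t. h (z(j := t))) has_real_derivative E) (at s)" "\<bar>E\<bar> \<le> C"
    using assms unfolding partial_deriv_bounded_def by blast
  moreover have "\<bar>D + E\<bar> \<le> B + C"
    using \<open>\<bar>D\<bar> \<le> B\<close> \<open>\<bar>E\<bar> \<le> C\<close> by linarith
  ultimately show "\<exists>D. ((\<lambda>t. g (z(j := t)) + h (z(j := t))) has_real_derivative D) (at s) \<and> \<bar>D\<bar> \<le> B + C"
    by (intro exI[of _ "D + E"] conjI DERIV_add)
qed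

lemma partial_deriv_bounded_cmult:
  assumes "partial_deriv_bounded h j B"
  shows "partial_deriv_bounded (\<lambda>z. c * h z) j (\<bar>c\<bar> * B)"
  unfolding partial_deriv_bounded_def
proof (intro allI)
  fix z s
  obtain D where "((\<lambda>t. h (z(j := t))) has_real_derivative D) (at s)" "\<bar>D\<bar> \<le> B"
    using assms unfolding partial_deriv_bounded_def by blast
  moreover have "\<bar>c * D\<bar> \<le> \<bar>c\<bar> * B"
    using \<open>\<bar>D\<bar> \<le> B\<close> by (simp add: abs_mult mult_left_mono)
  ultimately show "\<exists>D. ((\<lambda>t. c * h (z(j := t))) has_real_derivative D) (at s) \<and> \<bar>D\<bar> \<le> \<bar>c\<bar> * B"
    by (intro exI[of _ "c * D"] conjI DERIV_cmult)
qed

lemma partial_deriv_bounded_sum: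
  assumes "\<And>i. i \<in> A \<Longrightarrow> partial_deriv_bounded (h i) j (B i)"
  shows "partial_deriv_bounded (\<lambda>z. \<Sum>i\<in>A. h i z) j (\<Sum>i\<in>A. B i)"
  unfolding partial_deriv_bounded_def
proof (intro allI)
  fix z s
  have "\<forall>i\<in>A. \<exists>D. ((\<lambda>t. h i (z(j := t))) has_real_derivative D) (at s) \<and> \<bar>D\<bar> \<le> B i"
    using assms unfolding partial_deriv_bounded_def by blast
  then obtain D where D: "\<And>i. i \<in> A \<Longrightarrow> ((\<lambda>t. h i (z(j := t))) has_real_derivative D i) (at s)"
    "\<And>i. i \<in> A \<Longrightarrow> \<bar>D i\<bar> \<le> B i"
    by (metis bchoice)
  have "\<bar>\<Sum>i\<in>A. D i\<bar> \<le> (\<Sum>i\<in>A. B i)"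
    using D(2) by (intro order_trans[OF sum_abs sum_mono])
  then show "\<exists>D. ((\<lambda>t. \<Sum>i\<in>A. h i (z(j := t))) has_real_derivative D) (at s) \<and> \<bar>D\<bar> \<le> (\<Sum>i\<in>A. B i)"
    using D(1) by (intro exI[of _ "\<Sum>i\<in>A. D i"] conjI DERIV_sum)
qed

lemma partial_deriv_bounded_rescale:
  assumes "partial_deriv_bounded h j B"
  shows "partial_deriv_bounded (\<lambda>z. h (\<lambda>i. k * z i)) j (\<bar>k\<bar> * B)"
  unfolding partial_deriv_bounded_def
proof (intro allI)
  fix z s
  obtain D where D: "((\<lambda>t. h ((\<lambda>i. k * z i)(j := t))) has_real_derivative D) (at (k * s))" "\<bar>D\<bar> \<le> B"
    using assms unfolding partial_deriv_bounded_def by blast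
  have "((\<lambda>t. h ((\<lambda>i. k * z i)(j := k * t))) has_real_derivative D * k) (at s)"
    using DERIV_chain2[OF D(1) DERIV_cmult[OF DERIV_ident, of k]] by simp
  moreover have "(\<lambda>i. k * (z(j := t)) i) = (\<lambda>i. k * z i)(j := k * t)" for t
    by auto
  ultimately show "\<exists>D. ((\<lambda>t. h (\<lambda>i. k * (z(j := t)) i)) has_real_derivative D) (at s) \<and> \<bar>D\<bar> \<le> \<bar>k\<bar> * B"
    using mult_right_mono[OF D(2) abs_ge_zero[of k]]
    by (intro exI[of _ "D * k"]) (simp add: abs_mult mult.commute)
qed

lemma partial_deriv_bounded_varphi:
  assumes "1 \<le> j0"
  shows "partial_deriv_bounded (\<lambda>z. varphi z j) j0
           ((if j = j0 then 4 else 0) + (if j = j0 + 1 then 4 * pi else 0))"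
proof (cases "j = 1")
  case True
  show ?thesis
  proof (cases "j0 = 1")
    case True
    have "partial_deriv_bounded (\<lambda>z. - Psi 1 * Phi (z 1)) 1 (\<bar>- Psi 1\<bar> * 4)"
      by (intro partial_deriv_bounded_cmult partial_deriv_boundedI[where D="\<lambda>_ s. dPhi s"])
        (simp_all add: Phi_has_real_derivative dPhi_nonneg dPhi_le_four)
    then show ?thesis
      using \<open>j = 1\<close> True Psi_nonneg[of 1] Psi_le_one[of 1]
      by (auto simp: varphi_def elim!: partial_deriv_bounded_mono)
  next
    case False
    then show ?thesis
      using \<open>j = 1\<close> assms by (auto simp: varphi_def intro: partial_deriv_bounded_const)
  qed
next
  case False
  then have varphi_eq: "varphi z j = Psi (- z (j - 1)) * Phi (- z j) - Psi (z (j - 1)) * Phi (z j)" for z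
    by (simp add: varphi_def)
  consider "j = j0" | "j = j0 + 1" | "j \<noteq> j0" "j - 1 \<noteq> j0"
    by linarith
  then show ?thesis
  proof cases
    case 1
    have "partial_deriv_bounded (\<lambda>z. varphi z j) j0 4"
    proof (rule partial_deriv_boundedI)
      fix z :: "nat \<Rightarrow> real" and s :: real
      let ?a = "z (j - 1)"
      have "(\<lambda>t. varphi (z(j0 := t)) j) = (\<lambda>t. Psi (- ?a) * Phi (- t) - Psi ?a * Phi t)"
      proof -
        have "j - 1 \<noteq> j0"
          using 1 assms by simp
        then show ?thesis
          unfolding varphi_eq using 1 by auto
      qed
      then show "((\<lambda>t. varphi (z(j0 := t)) j) has_real_derivative
               - (Psi (- ?a) * dPhi (- s) + Psi ?a * dPhi s)) (at s)"
        using has_real_derivative_odd_combination[OF Phi_has_real_derivative] by simp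
      show "\<bar>- (Psi (- ?a) * dPhi (- s) + Psi ?a * dPhi s)\<bar> \<le> 4"
        unfolding abs_minus_cancel using Psi_add_reflect_le_one[of ?a]
        by (intro abs_weighted_sum_le) (simp_all add: Psi_nonneg dPhi_nonneg dPhi_le_four)
    qed
    then show ?thesis
      using 1 by simp
  next
    case 2
    have "partial_deriv_bounded (\<lambda>z. varphi z j) j0 (4 * pi)"
    proof (rule partial_deriv_boundedI)
      fix z :: "nat \<Rightarrow> real" and s :: real
      let ?b = "z j"
      have "(\<lambda>t. varphi (z(j0 := t)) j) = (\<lambda>t. Phi (- ?b) * Psi (- t) - Phi ?b * Psi t)"
        unfolding varphi_eq using 2 by (auto simp: mult.commute)
      then show "((\<lambda>t. varphi (z(j0 := t)) j) has_real_derivative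
               - (Phi (- ?b) * dPsi (- s) + Phi ?b * dPsi s)) (at s)"
        using has_real_derivative_odd_combination[OF Psi_has_real_derivative] by simp
      show "\<bar>- (Phi (- ?b) * dPsi (- s) + Phi ?b * dPsi s)\<bar> \<le> 4 * pi"
        unfolding abs_minus_cancel using dPsi_add_reflect_le_one[of s]
        by (subst (1 2) mult.commute, intro abs_weighted_sum_le)
          (simp_all add: dPsi_nonneg Phi_nonneg Phi_le_four_pi)
    qed
    then show ?thesis
      using 2 by simp
  next
    case 3
    then show ?thesis
      by (auto simp: varphi_eq intro: partial_deriv_bounded_const)
  qed
qed

lemma partial_deriv_bounded_varphi_sum:
  assumes "1 \<le> j0"
  shows "partial_deriv_bounded (\<lambda>z. \<Sum>j=1..n. varphi z (2 * j + r)) j0 (4 + 4 * pi)"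
proof -
  let ?B = "\<lambda>j. (if 2 * j + r = j0 then 4 else 0) + (if 2 * j + r = j0 + 1 then 4 * pi else 0)"
  have "partial_deriv_bounded (\<lambda>z. \<Sum>j=1..n. varphi z (2 * j + r)) j0 (\<Sum>j=1..n. ?B j)"
    by (intro partial_deriv_bounded_sum partial_deriv_bounded_varphi assms)
  moreover have "(\<Sum>j=1..n. ?B j) \<le> (\<Sum>j=1..n. (if j = (j0 - r) div 2 then 4 else 0)
                                   + (if j = (j0 + 1 - r) div 2 then 4 * pi else 0))"
    by (intro sum_mono add_mono) auto
  moreover have "\<dots> \<le> 4 + 4 * pi"
    by (simp add: sum.distrib)
  ultimately show ?thesis
    by (auto elim: partial_deriv_bounded_mono)
qed

lemma partial_deriv_bounded_hfun:
  assumes "1 \<le> j0"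
  shows "partial_deriv_bounded (hfun m dbar i) j0 (16 + 12 * pi)"
proof -
  have first: "partial_deriv_bounded (\<lambda>z. varphi z 1) j0 4"
    using partial_deriv_bounded_varphi[OF assms, of 1] assms
    by (auto elim: partial_deriv_bounded_mono)
  have with_sum: "partial_deriv_bounded
      (\<lambda>z. varphi z 1 + 3 * (\<Sum>j=1..dbar div 2. varphi z (2 * j + r))) j0 (16 + 12 * pi)" for r
    using partial_deriv_bounded_add[OF first
            partial_deriv_bounded_cmult[OF partial_deriv_bounded_varphi_sum[OF assms], of 3]]
    by (auto elim: partial_deriv_bounded_mono)
  have "hfun m dbar i =
      (if 1 \<le> i \<and> i \<le> m div 3 then (\<lambda>z. varphi z 1 + 3 * (\<Sum>j=1..dbar div 2. varphi z (2 * j + 0)))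
       else if m div 3 + 1 \<le> i \<and> i \<le> 2 * m div 3 then (\<lambda>z. varphi z 1)
       else (\<lambda>z. varphi z 1 + 3 * (\<Sum>j=1..dbar div 2. varphi z (2 * j + 1))))"
    unfolding hfun_def by (intro ext) simp
  then show ?thesis
    using with_sum[of 0] with_sum[of 1] partial_deriv_bounded_mono[OF first, of "16 + 12 * pi"]
    by auto
qed

lemma abs_grad_block_sum_le:
  assumes "\<And>i. i \<in> I \<Longrightarrow> partial_deriv_bounded (F i) j B"
    and "finite I" and "i0 \<in> I" and "j \<in> J"
  shows "\<bar>grad (I \<times> J) (\<lambda>x. \<Sum>i\<in>I. F i (\<lambda>j. x (i, j))) x (i0, j)\<bar> \<le> B"
proof -
  define w where "w = (\<lambda>j. x (i0, j))"
  obtain D where D: "((\<lambda>t. F i0 (w(j := t))) has_real_derivative D) (at (x (i0, j)))" "\<bar>D\<bar> \<le> B"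
    using assms(1)[OF assms(3)] unfolding partial_deriv_bounded_def by blast
  have "(\<Sum>i\<in>I. F i (\<lambda>j'. (x((i0, j) := t)) (i, j')))
        = F i0 (w(j := t)) + (\<Sum>i\<in>I - {i0}. F i (\<lambda>j. x (i, j)))" for t
  proof -
    have "(\<lambda>j'. (x((i0, j) := t)) (i0, j')) = w(j := t)"
      by (auto simp: w_def)
    then show ?thesis
      using assms(2,3) by (simp add: sum.remove)
  qed
  then have "((\<lambda>t. \<Sum>i\<in>I. F i (\<lambda>j'. (x((i0, j) := t)) (i, j'))) has_real_derivative D + 0)
               (at (x (i0, j)))"
    using D(1) by (simp only:) (intro DERIV_add DERIV_const)
  then show ?thesis
    using D(2) assms(3,4) by (simp add: grad_def DERIV_imp_deriv)
qed

lemma abs_grad_f0_le: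
  assumes "0 < \<epsilon>" "0 < Lf" "0 < m" "p \<in> Xidx m dbar"
  shows "\<bar>grad (Xidx m dbar) (f0 \<epsilon> Lf m dbar) x p\<bar> \<le> 2 * \<epsilon> / sqrt (real m) * (16 + 12 * pi)"
proof -
  define C where "C = 300 * pi * \<epsilon>\<^sup>2 / (real m * Lf)"
  define k where "k = sqrt (real m) * Lf / (150 * pi * \<epsilon>)"
  have ffun_eq: "ffun \<epsilon> Lf m dbar i = (\<lambda>z. C * hfun m dbar i (\<lambda>j. k * z j))" for i
    by (simp add: ffun_def C_def k_def fun_eq_iff)
  have "\<bar>C\<bar> * (\<bar>k\<bar> * B) = 2 * \<epsilon> / sqrt (real m) * B" for B
  proof -
    have "real m = sqrt (real m) * sqrt (real m)"
      using assms(3) by simp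
    then show ?thesis
      using assms by (simp add: C_def k_def power2_eq_square field_simps)
  qed
  then have "partial_deriv_bounded (ffun \<epsilon> Lf m dbar i) j (2 * \<epsilon> / sqrt (real m) * (16 + 12 * pi))"
    if "1 \<le> j" for i j
    unfolding ffun_eq
    by (metis partial_deriv_bounded_cmult partial_deriv_bounded_rescale partial_deriv_bounded_hfun that)
  then show ?thesis
    using assms(4) abs_grad_block_sum_le[of "{1..m}"]
    unfolding Xidx_def f0_def[abs_def] by auto
qed

section \<open>Vectors, matrices and the l1 norm\<close>

lemma vnorm_eq_L2_set: "vnorm R v = L2_set v R"
  by (simp add: vnorm_def L2_set_def)

lemma vnorm_nonneg: "0 \<le> vnorm R v"
  by (simp add: vnorm_eq_L2_set)

lemma vnorm_cong_abs:
  assumes "\<And>p. p \<in> R \<Longrightarrow> \<bar>u p\<bar> = \<bar>v p\<bar>"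
  shows "vnorm R u = vnorm R v"
proof -
  have "(u p)\<^sup>2 = (v p)\<^sup>2" if "p \<in> R" for p
    using assms[OF that] by (metis power2_abs)
  then show ?thesis
    unfolding vnorm_def by (simp cong: sum.cong)
qed

lemma abs_le_vnorm: "finite R \<Longrightarrow> p \<in> R \<Longrightarrow> \<bar>v p\<bar> \<le> vnorm R v"
  using member_le_L2_set[of R p "\<lambda>q. \<bar>v q\<bar>"] by (simp add: vnorm_eq_L2_set L2_set_def)

lemma vnorm_Un_le:
  assumes "finite A" "finite B" "A \<inter> B = {}" "vnorm A v \<le> \<eta>" "vnorm B v \<le> \<eta>"
  shows "vnorm (A \<union> B) v \<le> 2 * \<eta>"
proof -
  have "0 \<le> \<eta>"
    using assms(4) vnorm_nonneg order_trans by blast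
  have "(\<Sum>p\<in>A \<union> B. (v p)\<^sup>2) = (\<Sum>p\<in>A. (v p)\<^sup>2) + (\<Sum>p\<in>B. (v p)\<^sup>2)"
    using assms(1-3) by (rule sum.union_disjoint)
  also have "\<dots> \<le> \<eta>\<^sup>2 + \<eta>\<^sup>2"
    using assms(4,5) unfolding vnorm_def by (intro add_mono sqrt_le_D)
  also have "\<dots> \<le> (2 * \<eta>)\<^sup>2"
    by (simp add: power2_eq_square)
  finally show ?thesis
    unfolding vnorm_def using \<open>0 \<le> \<eta>\<close> by (intro real_le_lsqrt) auto
qed

lemma vnorm_mono: "finite B \<Longrightarrow> A \<subseteq> B \<Longrightarrow> vnorm A v \<le> vnorm B v"
  unfolding vnorm_def by (intro real_sqrt_le_mono sum_mono2) auto

lemma sum_abs_le_sqrt_card_vnorm: "(\<Sum>q\<in>S. \<bar>v q\<bar>) \<le> sqrt (real (card S)) * vnorm S v"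
  using L2_set_mult_ineq[of v "\<lambda>_. 1" S]
  by (simp add: vnorm_eq_L2_set L2_set_constant mult.commute)

lemma abs_entry_le_opnorm:
  assumes "finite R" "finite C" "r \<in> R" "c \<in> C"
  shows "\<bar>M r c\<bar> \<le> opnorm R C M"
proof -
  let ?S = "{vnorm R (matvec R C M x) | x. x \<in> vecs C \<and> vnorm C x \<le> 1}"
  define e where "e = (\<lambda>q. if q = c then 1 else (0::real))"
  have e_squared: "(\<lambda>q. (e q)\<^sup>2) = e"
    by (simp add: e_def fun_eq_iff)
  have "vnorm C e = 1"
    using assms(2,4) unfolding vnorm_def e_squared by (simp add: e_def)
  moreover have "e \<in> vecs C"
    using assms(4) by (simp add: vecs_def e_def)
  ultimately have in_S: "vnorm R (matvec R C M e) \<in> ?S"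
    by fastforce
  have "bdd_above ?S"
  proof (rule bdd_aboveI)
    fix y assume "y \<in> ?S"
    then obtain x where x: "vnorm C x \<le> 1" and y: "y = vnorm R (matvec R C M x)"
      by blast
    have "\<bar>M r' q * x q\<bar> \<le> \<bar>M r' q\<bar>" if "q \<in> C" for r' q
      using mult_left_mono[OF order_trans[OF abs_le_vnorm[OF assms(2) that] x] abs_ge_zero]
      by (simp add: abs_mult)
    then have "\<bar>matvec R C M x r'\<bar> \<le> (\<Sum>q\<in>C. \<bar>M r' q\<bar>)" if "r' \<in> R" for r'
      using that by (simp add: matvec_def order_trans[OF sum_abs sum_mono])
    then show "y \<le> (\<Sum>r'\<in>R. \<Sum>q\<in>C. \<bar>M r' q\<bar>)"
      unfolding y vnorm_eq_L2_set by (intro order_trans[OF L2_set_le_sum_abs sum_mono])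
  qed
  have "matvec R C M e r = (\<Sum>q\<in>C. if q = c then M r q else 0)"
    using assms(3) unfolding matvec_def e_def by (auto intro: sum.cong)
  also have "\<dots> = M r c"
    using assms(2,4) by simp
  finally have "matvec R C M e r = M r c" .
  then have "\<bar>M r c\<bar> \<le> vnorm R (matvec R C M e)"
    using abs_le_vnorm[OF assms(1,3)] by metis
  also have "\<dots> \<le> opnorm R C M"
    unfolding opnorm_def by (rule cSup_upper[OF in_S \<open>bdd_above ?S\<close>])
  finally show ?thesis .
qed

lemma tmatvec_Un:
  assumes "finite A" "finite B" "u \<in> vecs A" "v \<in> vecs B"
  shows "tmatvec (A \<union> B) C M (\<lambda>r. u r + v r) c = tmatvec A C M u c + tmatvec B C M v c"
proof -
  have "(\<Sum>r\<in>A \<union> B. M r c * u r) = (\<Sum>r\<in>A. M r c * u r)"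
    using assms(1-3) by (intro sum.mono_neutral_right) (auto simp: vecs_def)
  moreover have "(\<Sum>r\<in>A \<union> B. M r c * v r) = (\<Sum>r\<in>B. M r c * v r)"
    using assms(1,2,4) by (intro sum.mono_neutral_right) (auto simp: vecs_def)
  ultimately show ?thesis
    by (simp add: tmatvec_def distrib_left sum.distrib)
qed

lemma sgn_scaled_in_subdiff_l1:
  assumes "0 \<le> c"
  shows "(\<lambda>q. if q \<in> R then c * sgn (y q) else 0) \<in> subdiff R (\<lambda>y. c * l1norm R y) y"
proof -
  have "\<bar>y q\<bar> + sgn (y q) * (w q - y q) \<le> \<bar>w q\<bar>" for w q
    by (cases "y q" "0::real" rule: linorder_cases) (auto simp: sgn_real_def)
  then have "c * (\<bar>y q\<bar> + sgn (y q) * (w q - y q)) \<le> c * \<bar>w q\<bar>" for w q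
    using assms by (rule mult_left_mono)
  then have "c * l1norm R y + vinner R (\<lambda>q. if q \<in> R then c * sgn (y q) else 0) (\<lambda>q. w q - y q)
               \<le> c * l1norm R w" for w
    unfolding l1norm_def vinner_def sum_distrib_left sum.distrib[symmetric]
    by (intro sum_mono) (simp add: algebra_simps)
  then show ?thesis
    by (auto simp: subdiff_def vecs_def)
qed

lemma abs_subgradient_l1_ge:
  assumes "finite R" "p \<in> R" "y \<in> vecs R" "y p \<noteq> 0"
    and "s \<in> subdiff R (\<lambda>y. c * l1norm R y) y"
  shows "c \<le> \<bar>s p\<bar>"
proof -
  define w where "w = y(p := 0)"
  have "w \<in> vecs R"
    using assms(3) by (auto simp: vecs_def w_def)
  then have "c * l1norm R y + vinner R s (\<lambda>q. w q - y q) \<le> c * l1norm R w"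
    using assms(5) by (auto simp: subdiff_def)
  moreover have "l1norm R w = l1norm R y - \<bar>y p\<bar>"
    using assms(1,2) by (simp add: l1norm_def w_def sum.remove)
  moreover have "vinner R s (\<lambda>q. w q - y q) = - (s p * y p)"
    using assms(1,2) by (simp add: vinner_def w_def sum.remove)
  ultimately have "c * \<bar>y p\<bar> \<le> s p * y p"
    by (simp add: algebra_simps)
  also have "\<dots> \<le> \<bar>s p\<bar> * \<bar>y p\<bar>"
    by (metis abs_ge_self abs_mult)
  finally show ?thesis
    using assms(4) by simp
qed

lemma l1_subdiff_dist_small_imp_zero:
  assumes "finite R" "p \<in> R" "y \<in> vecs R" "0 \<le> c"
    and "dist0_shift R (subdiff R (\<lambda>y. c * l1norm R y) y) z \<le> \<eta>"
    and "\<bar>z p\<bar> < c - \<eta>"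
  shows "y p = 0"
proof (rule ccontr)
  assume "y p \<noteq> 0"
  let ?S = "{vnorm R (\<lambda>q. s q - z q) | s. s \<in> subdiff R (\<lambda>y. c * l1norm R y) y}"
  have "c - \<bar>z p\<bar> \<le> Inf ?S"
  proof (rule cInf_greatest)
    show "?S \<noteq> {}"
      using sgn_scaled_in_subdiff_l1[OF assms(4)] by blast
    fix d assume "d \<in> ?S"
    then obtain s where s: "s \<in> subdiff R (\<lambda>y. c * l1norm R y) y" and d: "d = vnorm R (\<lambda>q. s q - z q)"
      by blast
    have "c - \<bar>z p\<bar> \<le> \<bar>s p - z p\<bar>"
      using abs_subgradient_l1_ge[OF assms(1-3) \<open>y p \<noteq> 0\<close> s] by linarith
    also have "\<dots> \<le> d"
      unfolding d using abs_le_vnorm[OF assms(1,2), of "\<lambda>q. s q - z q"] by simp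
    finally show "c - \<bar>z p\<bar> \<le> d" .
  qed
  with assms(5,6) show False
    unfolding dist0_shift_def by linarith
qed

section \<open>The constraint matrix H\<close>

lemma tmatvec_Hrows:
  assumes "\<gamma> \<in> vecs (Hrows m dbar)" "1 \<le> i" "i \<le> m" "j \<in> {1..dbar}"
  shows "tmatvec (Hrows m dbar) (Xidx m dbar) (Kmat m Lf) \<gamma> (i, j)
           = real m * Lf * (\<gamma> (i - 1, j) - \<gamma> (i, j))"
proof -
  have \<gamma>_zero: "\<gamma> (k, j) = 0" if "k \<notin> {1..m - 1}" for k
    using assms(1,4) that by (auto simp: vecs_def Hrows_def)
  have "tmatvec (Hrows m dbar) (Xidx m dbar) (Kmat m Lf) \<gamma> (i, j)
        = (\<Sum>k\<in>{1..m - 1}. \<Sum>l\<in>{1..dbar}. Kmat m Lf (k, l) (i, j) * \<gamma> (k, l))"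
    using assms(2-4) by (simp add: tmatvec_def Hrows_def Xidx_def sum.cartesian_product)
  also have "\<dots> = (\<Sum>k\<in>{1..m - 1}. real m * Lf * Jent k i * \<gamma> (k, j))"
  proof (intro sum.cong refl)
    fix k
    have "(\<Sum>l\<in>{1..dbar}. Kmat m Lf (k, l) (i, j) * \<gamma> (k, l))
          = (\<Sum>l\<in>{1..dbar}. if l = j then real m * Lf * Jent k i * \<gamma> (k, j) else 0)"
      by (intro sum.cong) (auto simp: Kmat_def)
    then show "(\<Sum>l\<in>{1..dbar}. Kmat m Lf (k, l) (i, j) * \<gamma> (k, l))
               = real m * Lf * Jent k i * \<gamma> (k, j)"
      using assms(4) by simp
  qed
  also have "\<dots> = (\<Sum>k\<in>{0..m}. real m * Lf * Jent k i * \<gamma> (k, j))"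
    by (rule sum.mono_neutral_left) (auto simp: \<gamma>_zero)
  also have "\<dots> = (\<Sum>k\<in>{0..m}. (if k = i - 1 then real m * Lf * \<gamma> (k, j) else 0)
                                 - (if k = i then real m * Lf * \<gamma> (k, j) else 0))"
    using assms(2) by (intro sum.cong) (auto simp: Jent_def)
  also have "\<dots> = real m * Lf * (\<gamma> (i - 1, j) - \<gamma> (i, j))"
    using assms(2,3) by (simp add: sum_subtractf algebra_simps)
  finally show ?thesis .
qed

lemma sum_tmatvec_Hrows:
  assumes "\<gamma> \<in> vecs (Hrows m dbar)" "k \<le> m" "j \<in> {1..dbar}"
  shows "(\<Sum>i=1..k. tmatvec (Hrows m dbar) (Xidx m dbar) (Kmat m Lf) \<gamma> (i, j))
           = - (real m * Lf * \<gamma> (k, j))"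
proof -
  have "(\<Sum>i=1..k. tmatvec (Hrows m dbar) (Xidx m dbar) (Kmat m Lf) \<gamma> (i, j))
        = (\<Sum>i=1..k. - (real m * Lf) * (\<gamma> (i, j) - \<gamma> (i - 1, j)))"
    using assms by (intro sum.cong) (simp_all add: tmatvec_Hrows algebra_simps)
  also have "\<dots> = - (real m * Lf) * (\<gamma> (k, j) - \<gamma> (0, j))"
    unfolding sum_negf sum_distrib_left[symmetric]
    using sum_telescope''[of 0 k "\<lambda>i. \<gamma> (i, j)"] by simp
  also have "\<gamma> (0, j) = 0"
    using assms(1) by (simp add: vecs_def Hrows_def)
  finally show ?thesis
    by simp
qed

text \<open>Summing the stationarity residual over the blocks 1, ..., k telescopes the multiplier.\<close>
lemma abs_multiplier_Hrows_le:
  assumes "\<gamma> \<in> vecs (Hrows m dbar)" "k \<le> m" "j \<in> {1..dbar}"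
    and "\<And>p. p \<in> Xidx m dbar \<Longrightarrow> \<bar>g p\<bar> \<le> G"
    and "vnorm (Xidx m dbar) (\<lambda>p. g p + tmatvec (Hrows m dbar) (Xidx m dbar) (Kmat m Lf) \<gamma> p) \<le> \<eta>"
  shows "\<bar>real m * Lf * \<gamma> (k, j)\<bar> \<le> real k * G + sqrt (real k) * \<eta>"
proof -
  define e where "e = (\<lambda>p. g p + tmatvec (Hrows m dbar) (Xidx m dbar) (Kmat m Lf) \<gamma> p)"
  define S where "S = (\<lambda>i. (i, j)) ` {1..k}"
  have S_sub: "S \<subseteq> Xidx m dbar"
    using assms(2,3) by (auto simp: S_def Xidx_def)
  have "real m * Lf * \<gamma> (k, j) = (\<Sum>i=1..k. g (i, j) - e (i, j))"
    using sum_tmatvec_Hrows[OF assms(1-3), of Lf] by (simp add: e_def sum_negf)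
  then have "\<bar>real m * Lf * \<gamma> (k, j)\<bar> \<le> (\<Sum>i=1..k. \<bar>g (i, j)\<bar>) + (\<Sum>i=1..k. \<bar>e (i, j)\<bar>)"
    by (simp add: sum.distrib[symmetric] order_trans[OF sum_abs sum_mono] abs_triangle_ineq4)
  also have "(\<Sum>i=1..k. \<bar>g (i, j)\<bar>) \<le> real k * G"
    using assms(2-4) sum_mono[of "{1..k}" "\<lambda>i. \<bar>g (i, j)\<bar>" "\<lambda>_. G"]
    by (auto simp: Xidx_def)
  also have "(\<Sum>i=1..k. \<bar>e (i, j)\<bar>) = (\<Sum>q\<in>S. \<bar>e q\<bar>)"
    by (simp add: S_def sum.reindex inj_on_def)
  also have "\<dots> \<le> sqrt (real k) * vnorm S e"
    using sum_abs_le_sqrt_card_vnorm[of e S] by (simp add: S_def card_image inj_on_def)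
  also have "\<dots> \<le> sqrt (real k) * \<eta>"
    using vnorm_mono[OF _ S_sub, of e] assms(5)[folded e_def]
    by (intro mult_left_mono) (auto simp: Xidx_def)
  finally show ?thesis
    by simp
qed

lemma Mset_subset:
  assumes "1 \<le> m1"
  shows "Mset m1 m2 \<subseteq> {1..3 * m1 * m2 - 1}"
proof
  fix k assume "k \<in> Mset m1 m2"
  then obtain i where k: "k = i * m1" and i: "1 \<le> i" "i \<le> 3 * m2 - 1"
    by (auto simp: Mset_def)
  have "i * m1 < 3 * m2 * m1"
    using i assms by (intro mult_strict_right_mono) auto
  then have "k < 3 * m1 * m2"
    by (simp add: k ac_simps)
  moreover have "1 \<le> k"
    using i assms by (simp add: k)
  ultimately show "k \<in> {1..3 * m1 * m2 - 1}"
    by simp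
qed

lemma finite_Mset: "finite (Mset m1 m2)"
proof -
  have "Mset m1 m2 = (\<lambda>i. i * m1) ` {1..3 * m2 - 1}"
    by (auto simp: Mset_def)
  then show ?thesis
    by simp
qed

lemma one_notin_Mset: "2 \<le> m1 \<Longrightarrow> 1 \<notin> Mset m1 m2"
  by (auto simp: Mset_def)

lemma Hrows_eq_Un:
  assumes "1 \<le> m1"
  shows "Hrows (3 * m1 * m2) dbar = Mset m1 m2 \<times> {1..dbar} \<union> MCset m1 m2 \<times> {1..dbar}"
  using Mset_subset[OF assms, of m2] by (auto simp: Hrows_def MCset_def)

lemma Lf_mult_le_opnorm_MCset:
  assumes "2 \<le> m1" "1 \<le> m2" "1 \<le> dbar" "0 \<le> Lf"
  shows "real (3 * m1 * m2) * Lf \<le> opnorm (MCset m1 m2 \<times> {1..dbar}) (Xidx (3 * m1 * m2) dbar) (Kmat (3 * m1 * m2) Lf)"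
proof -
  have "2 * 1 \<le> m1 * (3 * m2)"
    using assms(1,2) by (intro mult_le_mono) auto
  then have "((1, 1), (1, 1)) \<in> (MCset m1 m2 \<times> {1..dbar}) \<times> Xidx (3 * m1 * m2) dbar"
    using assms(1-3) one_notin_Mset by (auto simp: MCset_def Xidx_def)
  from abs_entry_le_opnorm[of _ _ "(1, 1)" "(1, 1)" "Kmat (3 * m1 * m2) Lf"] this
  show ?thesis
    using assms(4) by (auto simp: Kmat_def Jent_def MCset_def Xidx_def)
qed

section \<open>Stationary points of the splitting reformulation\<close>

lemma AP_stationaryI:
  assumes "\<gamma> \<in> vecs (Hrows m dbar)"
    and "vnorm (Hrows m dbar) (matvec (Hrows m dbar) (Xidx m dbar) (Kmat m Lf) xs) \<le> \<delta>"
    and "vnorm (Xidx m dbar) (\<lambda>p. grad (Xidx m dbar) (f0 \<epsilon> Lf m dbar) xs p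
                                 + tmatvec (Hrows m dbar) (Xidx m dbar) (Kmat m Lf) \<gamma> p) \<le> \<delta>"
  shows "AP_stationary \<epsilon> Lf m dbar \<delta> xs"
proof -
  let ?S = "{vnorm (Xidx m dbar) (\<lambda>p. grad (Xidx m dbar) (f0 \<epsilon> Lf m dbar) xs p
                         + tmatvec (Hrows m dbar) (Xidx m dbar) (Kmat m Lf) \<gamma>' p) | \<gamma>'. \<gamma>' \<in> vecs (Hrows m dbar)}"
  have "Inf ?S \<le> \<delta>"
    using assms(1,3) by (intro cInf_lower2[of _ ?S] bdd_belowI[of ?S 0]) (auto simp: vnorm_nonneg)
  with assms(2) show ?thesis
    by (simp add: AP_stationary_def Let_def)
qed

lemma multiplier_bound_below_beta:
  fixes m L a \<beta> \<epsilon> \<eta> :: real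
  assumes "1 \<le> m" "0 \<le> L" "L \<le> a" "0 < \<epsilon>" "0 \<le> \<eta>" "\<eta> \<le> \<epsilon>"
    and "(50 * pi + 1 + a) * sqrt m * \<epsilon> < \<beta>"
  shows "m * (2 * \<epsilon> / sqrt m * (16 + 12 * pi)) + sqrt m * \<eta> < \<beta> - L * \<eta>"
proof -
  have "1 \<le> sqrt m"
    using assms(1) by simp
  have "s\<^sup>2 * (2 * \<epsilon> / s * (16 + 12 * pi)) = s * \<epsilon> * (32 + 24 * pi)" if "0 < s" for s
    using that by (simp add: power2_eq_square field_simps)
  from this[of "sqrt m"] have "m * (2 * \<epsilon> / sqrt m * (16 + 12 * pi)) = sqrt m * \<epsilon> * (32 + 24 * pi)"
    using assms(1) by simp
  also have "\<dots> \<le> sqrt m * \<epsilon> * (50 * pi)"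
    using pi_gt3 assms(1,4) by (intro mult_left_mono) auto
  finally have "m * (2 * \<epsilon> / sqrt m * (16 + 12 * pi)) \<le> sqrt m * \<epsilon> * (50 * pi)" .
  moreover have "sqrt m * \<eta> \<le> sqrt m * \<epsilon>"
    using assms(1,6) by (intro mult_left_mono) auto
  moreover have "L * \<eta> \<le> a * (sqrt m * \<epsilon>)"
  proof -
    have "\<epsilon> \<le> sqrt m * \<epsilon>"
      using mult_right_mono[OF \<open>1 \<le> sqrt m\<close>, of \<epsilon>] assms(4) by simp
    then have "\<eta> \<le> sqrt m * \<epsilon>"
      using assms(6) by linarith
    then show ?thesis
      using assms(2,3,5) by (intro mult_mono) auto
  qed
  ultimately show ?thesis
    using assms(7) by (simp add: algebra_simps)
qed

lemma SP_stationary_split_variable_vanishes: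
  fixes \<epsilon> Lf \<beta> eh :: real and m1 m2 dbar :: nat
  defines "m \<equiv> 3 * m1 * m2" and "Rb \<equiv> Mset m1 m2 \<times> {1..dbar}"
  assumes \<epsilon>: "0 < \<epsilon>" and Lf: "0 < Lf" and m1: "2 \<le> m1" and m2: "1 \<le> m2" and dbar: "1 \<le> dbar"
    and eh: "0 \<le> eh" "eh \<le> \<epsilon>"
    and \<beta>: "\<beta> > (50 * pi + 1 + opnorm (MCset m1 m2 \<times> {1..dbar}) (Xidx m dbar) (Kmat m Lf))
                * sqrt (real m) * \<epsilon>"
    and ys: "ys \<in> vecs Rb"
    and \<gamma>: "\<gamma> \<in> vecs (Hrows m dbar)" "\<And>r. r \<in> Rb \<Longrightarrow> \<gamma> r = z r"
    and dist: "dist0_shift Rb (subdiff Rb (gbar \<beta> m Lf Rb) ys) z \<le> eh"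
    and residual: "vnorm (Xidx m dbar) (\<lambda>p. grad (Xidx m dbar) (f0 \<epsilon> Lf m dbar) xs p
                                 + tmatvec (Hrows m dbar) (Xidx m dbar) (Kmat m Lf) \<gamma> p) \<le> eh"
    and p: "p \<in> Rb"
  shows "ys p = 0"
proof -
  define G where "G = 2 * \<epsilon> / sqrt (real m) * (16 + 12 * pi)"
  define c where "c = \<beta> / (real m * Lf)"
  obtain k j where kj: "p = (k, j)" and "k \<in> Mset m1 m2" and j: "j \<in> {1..dbar}"
    using p by (auto simp: Rb_def)
  then have "k \<in> {1..m - 1}"
    using Mset_subset[of m1 m2] m1 by (auto simp: m_def)
  then have "k \<le> m"
    by auto
  have "1 \<le> m"
    using m1 m2 by (simp add: m_def)
  have "\<bar>grad (Xidx m dbar) (f0 \<epsilon> Lf m dbar) xs q\<bar> \<le> G" if "q \<in> Xidx m dbar" for q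
    using abs_grad_f0_le[OF \<epsilon> Lf _ that] \<open>1 \<le> m\<close> by (simp add: G_def)
  then have "\<bar>real m * Lf * \<gamma> (k, j)\<bar> \<le> real k * G + sqrt (real k) * eh"
    by (rule abs_multiplier_Hrows_le[OF \<gamma>(1) \<open>k \<le> m\<close> j _ residual])
  also have "\<dots> \<le> real m * G + sqrt (real m) * eh"
    using \<open>k \<le> m\<close> \<epsilon> eh by (intro add_mono mult_right_mono) (auto simp: G_def)
  also have "\<dots> < \<beta> - real m * Lf * eh"
    using \<epsilon> Lf eh \<beta> \<open>1 \<le> m\<close> Lf_mult_le_opnorm_MCset[OF m1 m2 dbar, of Lf, folded m_def]
    unfolding G_def by (intro multiplier_bound_below_beta) auto
  finally have bound: "\<bar>real m * Lf * \<gamma> (k, j)\<bar> < \<beta> - real m * Lf * eh" .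
  then have "\<bar>z p\<bar> < c - eh"
    using Lf \<open>1 \<le> m\<close> \<gamma>(2)[OF p] by (simp add: c_def kj field_simps abs_mult)
  moreover have "0 \<le> c"
  proof -
    have "0 \<le> real m * Lf * eh"
      using Lf eh by simp
    then have "0 \<le> \<beta>"
      using bound abs_ge_zero[of "real m * Lf * \<gamma> (k, j)"] by linarith
    then show ?thesis
      using Lf by (simp add: c_def)
  qed
  moreover have "gbar \<beta> m Lf Rb = (\<lambda>y. c * l1norm Rb y)"
    by (simp add: gbar_def c_def fun_eq_iff)
  moreover have "finite Rb"
    by (simp add: Rb_def finite_Mset)
  ultimately show ?thesis
    using l1_subdiff_dist_small_imp_zero[of Rb p ys c z eh] p ys dist by simp
qed

lemma vnorm_matvec_Hrows_le:
  fixes m1 m2 dbar :: nat and Lf :: real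
  defines "H \<equiv> Hrows (3 * m1 * m2) dbar" and "X \<equiv> Xidx (3 * m1 * m2) dbar" and "K \<equiv> Kmat (3 * m1 * m2) Lf"
    and "Rb \<equiv> Mset m1 m2 \<times> {1..dbar}" and "Ra \<equiv> MCset m1 m2 \<times> {1..dbar}"
  assumes "1 \<le> m1" and "\<And>p. p \<in> Rb \<Longrightarrow> ys p = 0"
    and "vnorm Rb (\<lambda>p. ys p - matvec Rb X K xs p) \<le> \<eta>" and "vnorm Ra (matvec Ra X K xs) \<le> \<eta>"
  shows "vnorm H (matvec H X K xs) \<le> 2 * \<eta>"
proof -
  have rows: "H = Rb \<union> Ra"
    using Hrows_eq_Un[OF assms(6)] by (simp add: H_def Rb_def Ra_def)
  have "vnorm Rb (matvec H X K xs) = vnorm Rb (\<lambda>p. ys p - matvec Rb X K xs p)"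
    using assms(7) by (intro vnorm_cong_abs) (simp add: rows matvec_def)
  moreover have "vnorm Ra (matvec H X K xs) = vnorm Ra (matvec Ra X K xs)"
    by (intro vnorm_cong_abs) (simp add: rows matvec_def)
  ultimately show ?thesis
    unfolding rows using assms(8,9) finite_Mset
    by (intro vnorm_Un_le) (auto simp: Rb_def Ra_def MCset_def)
qed

theorem lemma9:
  fixes \<epsilon> Lf \<beta> eh :: real and m1 m2 dbar :: nat and xs ys :: vec
  assumes "0 < \<epsilon>" and "\<epsilon> < 1" and "0 < Lf"
    and "m1 \<ge> 2" and "m2 \<ge> 1" and "even (m1 * m2)"
    and "odd dbar" and "dbar \<ge> 5"
    and "\<beta> > (50 * pi + 1 + opnorm (MCset m1 m2 \<times> {1..dbar}) (Xidx (3 * m1 * m2) dbar)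
                                  (Kmat (3 * m1 * m2) Lf))
              * sqrt (real (3 * m1 * m2)) * \<epsilon>"
    and "0 \<le> eh" and "eh \<le> \<epsilon>"
    and "xs \<in> vecs (Xidx (3 * m1 * m2) dbar)"
    and "ys \<in> vecs (Mset m1 m2 \<times> {1..dbar})"
    and "SP_stationary \<epsilon> Lf m1 m2 dbar \<beta> eh xs ys"
  shows "AP_stationary \<epsilon> Lf (3 * m1 * m2) dbar (2 * eh) xs"
proof -
  let ?m = "3 * m1 * m2" and ?Rb = "Mset m1 m2 \<times> {1..dbar}" and ?Ra = "MCset m1 m2 \<times> {1..dbar}"
  let ?X = "Xidx ?m dbar" and ?H = "Hrows ?m dbar" and ?K = "Kmat ?m Lf"
  have rows: "?H = ?Rb \<union> ?Ra" "?Rb \<inter> ?Ra = {}" "finite ?Rb" "finite ?Ra"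
    using Hrows_eq_Un[of m1 m2 dbar] assms(4) finite_Mset by (auto simp: MCset_def)
  from assms(14) obtain z1 z2 where z: "z1 \<in> vecs ?Rb" "z2 \<in> vecs ?Ra"
    and dist: "dist0_shift ?Rb (subdiff ?Rb (gbar \<beta> ?m Lf ?Rb) ys) z1 \<le> eh"
    and residual: "vnorm ?X (\<lambda>p. grad ?X (f0 \<epsilon> Lf ?m dbar) xs p
                                 + tmatvec ?Rb ?X ?K z1 p + tmatvec ?Ra ?X ?K z2 p) \<le> eh"
    and feasible: "vnorm ?Rb (\<lambda>p. ys p - matvec ?Rb ?X ?K xs p) \<le> eh" "vnorm ?Ra (matvec ?Ra ?X ?K xs) \<le> eh"
    unfolding SP_stationary_def Let_def by auto
  define \<gamma> where "\<gamma> = (\<lambda>r. z1 r + z2 r)"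
  have "z2 r = 0" if "r \<in> ?Rb" for r
    using z(2) rows(2) that unfolding vecs_def by blast
  then have \<gamma>: "\<gamma> \<in> vecs ?H" "\<And>r. r \<in> ?Rb \<Longrightarrow> \<gamma> r = z1 r"
    using z rows(1) by (auto simp: vecs_def \<gamma>_def)
  have \<gamma>_residual: "vnorm ?X (\<lambda>p. grad ?X (f0 \<epsilon> Lf ?m dbar) xs p + tmatvec ?H ?X ?K \<gamma> p) \<le> eh"
    using residual tmatvec_Un[OF rows(3,4) z] by (simp add: rows(1) \<gamma>_def add.assoc)
  have "ys p = 0" if "p \<in> ?Rb" for p
    using SP_stationary_split_variable_vanishes[OF assms(1,3,4,5) _ assms(10,11,9,13) \<gamma> dist \<gamma>_residual that]
      assms(8) by simp
  then have "vnorm ?H (matvec ?H ?X ?K xs) \<le> 2 * eh"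
    using assms(4) feasible by (intro vnorm_matvec_Hrows_le) auto
  then show ?thesis
    using \<gamma>_residual assms(10) by (intro AP_stationaryI[OF \<gamma>(1)]) auto
qed

end
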